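(* Let $K\ge 2$, let $\mathcal{C}_1,\dots,\mathcal{C}_K$ be a partition of $\mathcal{V}=\{v_1,\dots,v_N\}$ into sets of size $N/K$, and let $\mathcal{R}$ satisfy Assumption 1. Then the all-ones vector $\mathbf{1}\in\mathbb{R}^N$ is an eigenvector of $\mathbf{R}$ with eigenvalue $d$. For $k\in[K-1]$ define $\mathbf{u}_k\in\mathbb{R}^N$ by $u_{ki}=1$ if $v_i\in\mathcal{C}_k$ and $u_{ki}=-\frac1{K-1}$ otherwise. Then $\mathbf{1},\mathbf{u}_1,\dots,\mathbf{u}_{K-1}$ lie in the null space of $\mathbf{R}\left(\mathbf{I}-\frac1N\mathbf{1}\mathbf{1}^\intercal\right)$ and are linearly independent.
   Context: $\mathcal{R}$ is an undirected graph on $\mathcal{V}$ with symmetric adjacency $\mathbf{R}\in\{0,1\}^{N\times N}$. Assumption 1: $\mathcal{R}$ is $d$-regular for some $K\le d\le N$, $R_{ii}=1$ for all $i$ (self-loops counted in the degree), and each node is adjacent in $\mathcal{R}$ to exactly $d/K$ nodes of $\mathcal{C}_k$ for every $k\in[K]$ (including the self-loop). *)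

theory Defs
  imports "HOL-Analysis.Analysis"
begin

text \<open>Nodes are the elements of a finite type 'n, so N = CARD('n).
  Clusters are indexed by k in {1..K}.\<close>

definition ones_vec :: "real ^ 'n" where
  "ones_vec = (\<chi> i. 1)"

definition centering :: "real ^ 'n ^ 'n" where
  "centering = mat 1 - (1 / real CARD('n)) *\<^sub>R (\<chi> i j. 1)"

definition u_vec :: "(nat \<Rightarrow> 'n set) \<Rightarrow> nat \<Rightarrow> nat \<Rightarrow> real ^ 'n" where
  "u_vec C K k = (\<chi> i. if i \<in> C k then 1 else - 1 / (real K - 1))"

end

theory Submission
  imports Defs
begin

text \<open>The vector \<open>u\<^sub>k\<close> is an affine combination of the indicator of \<open>C\<^sub>k\<close> and the all-ones
  vector, so any linear functional that gives \<open>C\<^sub>k\<close> exactly a \<open>1/K\<close> share of its value on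
  the all-ones vector annihilates \<open>u\<^sub>k\<close>. Both the coordinate sum (balanced clusters) and each
  row of \<open>R\<close> (Assumption 1) are such functionals; hence \<open>u\<^sub>k\<close> is fixed by the centering
  matrix and killed by \<open>R\<close>. Linear independence follows from a dual family of functionals:
  the coordinate sum separates \<open>1\<close> from all \<open>u\<^sub>k\<close>, and \<open>x \<mapsto> x\<^sub>i - x\<^sub>j\<close> with \<open>i \<in> C\<^sub>k\<close>,
  \<open>j \<in> C\<^sub>K\<close> separates \<open>u\<^sub>k\<close> from \<open>1\<close> and from every other \<open>u\<^sub>l\<close>.\<close>

lemma inj_on_if_separating_functionals:
  assumes "\<And>i. i \<in> I \<Longrightarrow> f i (v i) \<noteq> 0"
    and "\<And>i j. i \<in> I \<Longrightarrow> j \<in> I \<Longrightarrow> i \<noteq> j \<Longrightarrow> f i (v j) = 0"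
  shows "inj_on v I"
  using assms by (metis inj_onI)

lemma independent_image_if_separating_functionals:
  fixes v :: "'i \<Rightarrow> 'a::real_vector" and f :: "'i \<Rightarrow> 'a \<Rightarrow> real"
  assumes lin: "\<And>i. i \<in> I \<Longrightarrow> linear (f i)"
    and diag: "\<And>i. i \<in> I \<Longrightarrow> f i (v i) \<noteq> 0"
    and offdiag: "\<And>i j. i \<in> I \<Longrightarrow> j \<in> I \<Longrightarrow> i \<noteq> j \<Longrightarrow> f i (v j) = 0"
  shows "independent (v ` I)"
proof
  assume "dependent (v ` I)"
  then obtain T c w where T: "finite T" "T \<subseteq> v ` I" and "w \<in> T" "c w \<noteq> 0"
    and comb: "(\<Sum>x\<in>T. c x *\<^sub>R x) = 0"
    unfolding dependent_explicit by blast
  then obtain i where i: "i \<in> I" "w = v i" by blast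
  have vanish: "f i x = 0" if "x \<in> T - {w}" for x
    using that T i offdiag by blast
  have "0 = f i (\<Sum>x\<in>T. c x *\<^sub>R x)"
    using comb lin[OF \<open>i \<in> I\<close>] by (simp add: linear_0)
  also have "\<dots> = (\<Sum>x\<in>T. c x * f i x)"
    using lin[OF \<open>i \<in> I\<close>] by (simp add: linear_sum linear_scale)
  also have "\<dots> = c w * f i w"
    using \<open>finite T\<close> \<open>w \<in> T\<close> vanish by (simp add: sum.remove)
  finally show False
    using \<open>c w \<noteq> 0\<close> diag i by simp
qed

lemma linear_weighted_coordinate_sum: "linear (\<lambda>x::real^'n. \<Sum>j\<in>UNIV. a j * x $ j)"
  by (rule linearI) (simp_all add: algebra_simps sum.distrib sum_distrib_left)

lemma sum_zero_one_eq_card: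
  fixes f :: "'a \<Rightarrow> real"
  assumes "finite A" and "\<And>j. j \<in> A \<Longrightarrow> f j = 0 \<or> f j = 1"
  shows "sum f A = real (card {j \<in> A. f j = 1})"
proof -
  have "sum f A = (\<Sum>j\<in>A. if f j = 1 then 1 else 0)"
    using assms(2) by (intro sum.cong) auto
  then show ?thesis
    using assms(1) by (simp add: sum.If_cases Int_def)
qed

lemma centering_mult:
  "centering *v x = x - ((\<Sum>j\<in>UNIV. x $ j) / real CARD('n)) *\<^sub>R (ones_vec :: real^'n)"
proof -
  have "((\<chi> i j. 1) :: real^'n^'n) *v x = (\<Sum>j\<in>UNIV. x $ j) *\<^sub>R ones_vec"
    by (simp add: vec_eq_iff matrix_vector_mult_def ones_vec_def)
  moreover have "centering *v x
      = x - (1 / real CARD('n)) *\<^sub>R (((\<chi> i j. 1) :: real^'n^'n) *v x)"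
    by (simp add: centering_def matrix_vector_mult_diff_rdistrib scaleR_matrix_vector_assoc)
  ultimately show ?thesis
    by simp
qed

lemma centering_ones: "centering *v ones_vec = (0 :: real^'n)"
  by (simp add: centering_mult ones_vec_def vec_eq_iff)

lemma centering_zero_sum: "(\<Sum>j\<in>UNIV. x $ j) = 0 \<Longrightarrow> centering *v x = x"
  by (simp add: centering_mult)

lemma u_vec_eq_indicator_combination:
  assumes "real K > 1"
  shows "u_vec C K k = (real K / (real K - 1)) *\<^sub>R (\<chi> i. indicator (C k) i)
    - (1 / (real K - 1)) *\<^sub>R ones_vec"
proof -
  have "real K - 1 \<noteq> 0"
    using assms by simp
  then show ?thesis
    by (simp add: vec_eq_iff u_vec_def ones_vec_def indicator_def diff_divide_distrib[symmetric])
qed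

lemma linear_u_vec_eq_zero:
  fixes L :: "real^'n \<Rightarrow> real"
  assumes "linear L" and "real K > 1"
    and share: "real K * L (\<chi> i. indicator (C k) i) = L ones_vec"
  shows "L (u_vec C K k) = 0"
proof -
  have "L (u_vec C K k)
      = real K / (real K - 1) * L (\<chi> i. indicator (C k) i) - 1 / (real K - 1) * L ones_vec"
    using assms(1,2) by (simp add: u_vec_eq_indicator_combination linear_diff linear_scale)
  also have "\<dots> = (real K * L (\<chi> i. indicator (C k) i) - L ones_vec) / (real K - 1)"
    by (simp add: diff_divide_distrib)
  finally show ?thesis
    using share by simp
qed

lemma sum_u_vec_eq_zero:
  fixes C :: "nat \<Rightarrow> 'n::finite set"
  assumes "real K > 1" and "real (card (C k)) = real CARD('n) / real K"
  shows "(\<Sum>j\<in>UNIV. u_vec C K k $ j) = 0"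
proof (rule linear_u_vec_eq_zero)
  show "linear (\<lambda>x::real^'n. \<Sum>j\<in>UNIV. x $ j)"
    using linear_weighted_coordinate_sum[of "\<lambda>_. 1"] by simp
  show "real K * (\<Sum>j\<in>UNIV. (\<chi> i. indicator (C k) i) $ j)
      = (\<Sum>j\<in>UNIV. (ones_vec :: real^'n) $ j)"
    using assms by (simp add: indicator_def sum.If_cases ones_vec_def)
qed (use assms in simp)

lemma mult_u_vec_eq_zero:
  fixes R :: "real^'n^'n"
  assumes "real K > 1"
    and "\<And>i. real K * (\<Sum>j\<in>C k. R $ i $ j) = (\<Sum>j\<in>UNIV. R $ i $ j)"
  shows "R *v u_vec C K k = 0"
proof -
  have "(R *v u_vec C K k) $ i = 0" for i
    using linear_u_vec_eq_zero[OF linear_weighted_coordinate_sum[of "\<lambda>j. R $ i $ j"], of K C k]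
      assms
    by (simp add: matrix_vector_mult_def indicator_def sum.If_cases ones_vec_def)
  then show ?thesis
    by (simp add: vec_eq_iff)
qed

lemma u_vec_nth_in_cluster:
  assumes "disjoint_family_on C I" "k \<in> I" "l \<in> I" "i \<in> C l"
  shows "u_vec C K k $ i = (if k = l then 1 else - 1 / (real K - 1))"
  using assms by (auto simp: u_vec_def disjoint_family_on_def)

lemma independent_ones_u_vec:
  fixes C :: "nat \<Rightarrow> 'n::finite set"
  assumes K2: "K \<ge> 2" and disj: "disjoint_family_on C {1..K}"
    and balanced: "\<And>k. k \<in> {1..K} \<Longrightarrow> real (card (C k)) = real CARD('n) / real K"
  shows "independent (insert ones_vec (u_vec C K ` {1..<K}))"
    and "card (insert ones_vec (u_vec C K ` {1..<K})) = K"
proof -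
  have K1: "real K > 1"
    using K2 by simp
  define rep where "rep k = (SOME i. i \<in> C k)" for k
  have rep: "rep k \<in> C k" if "k \<in> {1..K}" for k
    using balanced[OF that] K1 by (auto simp: rep_def some_in_eq)
  define v where "v k = (if k = 0 then ones_vec else u_vec C K k)" for k
  define f where "f k = (if k = 0 then (\<lambda>x::real^'n. \<Sum>j\<in>UNIV. x $ j)
    else (\<lambda>x. x $ rep k - x $ rep K))" for k
  have lin: "linear (f k)" for k
    using linear_weighted_coordinate_sum[of "\<lambda>_. 1"]
    by (cases "k = 0")
      (simp_all add: f_def bounded_linear.linear bounded_linear_sub bounded_linear_vec_nth)
  have u_rep: "u_vec C K k $ rep l = (if k = l then 1 else - 1 / (real K - 1))"
    if "k \<in> {1..K}" "l \<in> {1..K}" for k l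
    using u_vec_nth_in_cluster[OF disj that rep[OF that(2)]] .
  have diag: "f k (v k) \<noteq> 0" if "k \<in> {0..<K}" for k
    using that K1 u_rep[of k k] u_rep[of k K]
    by (auto simp: f_def v_def ones_vec_def field_simps)
  have offdiag: "f k (v l) = 0" if "k \<in> {0..<K}" "l \<in> {0..<K}" "k \<noteq> l" for k l
    using that K1 u_rep[of l k] u_rep[of l K] sum_u_vec_eq_zero[OF K1, where C = C and k = l]
      balanced[of l]
    by (auto simp: f_def v_def ones_vec_def)
  have image: "v ` {0..<K} = insert ones_vec (u_vec C K ` {1..<K})"
    using K2 by (auto simp: v_def image_iff atLeast0LessThan lessThan_Suc_eq_insert_0
        intro: rev_image_eqI)
  show "independent (insert ones_vec (u_vec C K ` {1..<K}))"
    using independent_image_if_separating_functionals[of "{0..<K}" f v] lin diag offdiag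
    unfolding image by blast
  show "card (insert ones_vec (u_vec C K ` {1..<K})) = K"
    using inj_on_if_separating_functionals[of "{0..<K}" f v] diag offdiag
    unfolding image[symmetric] by (simp add: card_image)
qed

theorem lemma3:
  fixes R :: "real ^ 'n ^ 'n"
    and C :: "nat \<Rightarrow> 'n set"
    and K d :: nat
  assumes K2: "K \<ge> 2"
    and part_cover: "(\<Union>k\<in>{1..K}. C k) = UNIV"
    and part_disj: "\<forall>k\<in>{1..K}. \<forall>l\<in>{1..K}. k \<noteq> l \<longrightarrow> C k \<inter> C l = {}"
    and part_size: "\<forall>k\<in>{1..K}. real (card (C k)) = real CARD('n) / real K"
    and R01: "\<forall>i j. R $ i $ j = 0 \<or> R $ i $ j = 1"
    and Rsym: "transpose R = R"
    and dbounds: "K \<le> d" "d \<le> CARD('n)"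
    and Rdiag: "\<forall>i. R $ i $ i = 1"
    and Rreg: "\<forall>i. (\<Sum>j\<in>UNIV. R $ i $ j) = real d"
    and Rclust: "\<forall>i. \<forall>k\<in>{1..K}. real (card {j \<in> C k. R $ i $ j = 1}) = real d / real K"
  shows "R *v ones_vec = real d *\<^sub>R ones_vec
    \<and> (R ** centering) *v ones_vec = 0
    \<and> (\<forall>k\<in>{1..<K}. (R ** centering) *v u_vec C K k = 0)
    \<and> independent (insert ones_vec (u_vec C K ` {1..<K}))
    \<and> card (insert ones_vec (u_vec C K ` {1..<K})) = K"
proof -
  have K1: "real K > 1"
    using K2 by simp
  have R_ones: "R *v ones_vec = real d *\<^sub>R ones_vec"
    using Rreg by (simp add: vec_eq_iff matrix_vector_mult_def ones_vec_def)
  have R_centering_u: "(R ** centering) *v u_vec C K k = 0" if "k \<in> {1..<K}" for k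
  proof -
    have "real K * (\<Sum>j\<in>C k. R $ i $ j) = (\<Sum>j\<in>UNIV. R $ i $ j)" for i
      using that R01 Rreg Rclust K1 by (simp add: sum_zero_one_eq_card)
    then show ?thesis
      using that part_size K1 by (simp add: matrix_vector_mul_assoc[symmetric]
          centering_zero_sum sum_u_vec_eq_zero mult_u_vec_eq_zero)
  qed
  have disj: "disjoint_family_on C {1..K}"
    using part_disj by (simp add: disjoint_family_on_def)
  show ?thesis
    using independent_ones_u_vec[OF K2 disj] part_size R_ones R_centering_u
    by (simp add: matrix_vector_mul_assoc[symmetric] centering_ones)
qed

end
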